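(* Let $q\ge3$ be an integer. Let $H_1,H_2$ be groups with $\mathcal{W}(H_1,\gamma_{q-1}(H_1),\gamma_q(H_1))\ne0$ and $\mathrm{W}(H_2,\gamma_{q-1}(H_2))\ne0$. Let $G$ be a group containing subgroups isomorphic to $H_1$ and to $H_2$ which are both retracts of $G$. Then $\mathcal{W}(G,\gamma_{q-1}(G),\gamma_q(G))\ne0$ and $\mathrm{W}(G,\gamma_{q-1}(G))\ne0$.
   Context: $\gamma_1(H)=H$, $\gamma_{k+1}(H)=[H,\gamma_k(H)]$. A subgroup $H\leqslant G$ is a retract if there is a homomorphism $\alpha\colon G\to G$ with $\alpha(G)=H$ and $\alpha|_H=\mathrm{id}_H$. For normal subgroups $L\geqslant N$ of a group $G$: $\mathrm{Q}(N)^G$ homogeneous quasimorphisms on $N$ invariant under $G$-conjugation, $\mathrm{H}^1(N)^G$ $G$-invariant homomorphisms $N\to\mathbb{R}$, $\mathcal{W}(G,L,N)=\mathrm{Q}(N)^G/(\mathrm{H}^1(N)^G+\{\psi|_N:\psi\in\mathrm{Q}(L)^G\})$, $\mathrm{W}(G,N)=\mathcal{W}(G,G,N)$. *)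

theory Defs
  imports Complex_Main "HOL-Algebra.Algebra"
begin

definition comm_subgroup :: "('a, 'm) monoid_scheme \<Rightarrow> 'a set \<Rightarrow> 'a set \<Rightarrow> 'a set" where
  "comm_subgroup G A B = generate G
     {a \<otimes>\<^bsub>G\<^esub> b \<otimes>\<^bsub>G\<^esub> inv\<^bsub>G\<^esub> a \<otimes>\<^bsub>G\<^esub> inv\<^bsub>G\<^esub> b | a b. a \<in> A \<and> b \<in> B}"

text \<open>Lower central series: gamma G 1 = G, gamma G (k+1) = [G, gamma G k]
  (gamma G 0 is also set to G, it is never used).\<close>
fun lcs :: "('a, 'm) monoid_scheme \<Rightarrow> nat \<Rightarrow> 'a set" where
  "lcs G 0 = carrier G"
| "lcs G (Suc k) = (if k = 0 then carrier G else comm_subgroup G (carrier G) (lcs G k))"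

definition inv_hom_qm :: "('a, 'm) monoid_scheme \<Rightarrow> 'a set \<Rightarrow> ('a \<Rightarrow> real) \<Rightarrow> bool" where
  "inv_hom_qm G N \<phi> \<longleftrightarrow>
     (\<exists>D. \<forall>x\<in>N. \<forall>y\<in>N. \<bar>\<phi> (x \<otimes>\<^bsub>G\<^esub> y) - \<phi> x - \<phi> y\<bar> \<le> D)
   \<and> (\<forall>x\<in>N. \<forall>n::int. \<phi> (x [^]\<^bsub>G\<^esub> n) = of_int n * \<phi> x)
   \<and> (\<forall>g\<in>carrier G. \<forall>x\<in>N. \<phi> (g \<otimes>\<^bsub>G\<^esub> x \<otimes>\<^bsub>G\<^esub> inv\<^bsub>G\<^esub> g) = \<phi> x)"

definition inv_hom_real :: "('a, 'm) monoid_scheme \<Rightarrow> 'a set \<Rightarrow> ('a \<Rightarrow> real) \<Rightarrow> bool" where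
  "inv_hom_real G N h \<longleftrightarrow>
     (\<forall>x\<in>N. \<forall>y\<in>N. h (x \<otimes>\<^bsub>G\<^esub> y) = h x + h y)
   \<and> (\<forall>g\<in>carrier G. \<forall>x\<in>N. h (g \<otimes>\<^bsub>G\<^esub> x \<otimes>\<^bsub>G\<^esub> inv\<^bsub>G\<^esub> g) = h x)"

text \<open>W(G,L,N) \<noteq> 0: some element of Q(N)^G is not in H^1(N)^G + Q(L)^G|_N
  (functions on N compared pointwise on N).\<close>
definition W_nonzero :: "('a, 'm) monoid_scheme \<Rightarrow> 'a set \<Rightarrow> 'a set \<Rightarrow> bool" where
  "W_nonzero G L N \<longleftrightarrow> (\<exists>\<psi>. inv_hom_qm G N \<psi> \<and>
     \<not> (\<exists>h \<phi>. inv_hom_real G N h \<and> inv_hom_qm G L \<phi> \<and> (\<forall>x\<in>N. \<psi> x = h x + \<phi> x)))"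

definition is_retract :: "('a, 'm) monoid_scheme \<Rightarrow> 'a set \<Rightarrow> bool" where
  "is_retract G H \<longleftrightarrow> (\<exists>\<alpha> \<in> hom G G. \<alpha> ` carrier G = H \<and> (\<forall>x\<in>H. \<alpha> x = x))"

end

theory Submission
  imports Defs
begin

text \<open>If \<open>H\<close> is isomorphic to a retract of \<open>G\<close>, there are homomorphisms \<open>\<beta> : G \<rightarrow> H\<close> and
  \<open>s : H \<rightarrow> G\<close> with \<open>\<beta> \<circ> s = id\<close>, and both map terms of the lower central series into the
  corresponding terms. Pulling a quasimorphism \<open>\<psi>\<close> that witnesses non-vanishing of \<open>\<W>\<close> for \<open>H\<close>
  back along \<open>\<beta>\<close> gives a witness for \<open>G\<close>: a decomposition \<open>\<psi> \<circ> \<beta> = h + \<phi>\<close> over \<open>G\<close> would pull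
  back along \<open>s\<close> to the decomposition \<open>\<psi> = h \<circ> s + \<phi> \<circ> s\<close> over \<open>H\<close>.\<close>

lemma (in group) comm_subgroup_subset_carrier:
  assumes "A \<subseteq> carrier G" and "B \<subseteq> carrier G"
  shows "comm_subgroup G A B \<subseteq> carrier G"
  unfolding comm_subgroup_def using assms by (intro generate_incl) (auto simp: subset_iff)

lemma (in group) comm_subgroup_mono:
  assumes "A \<subseteq> A'" and "B \<subseteq> B'"
  shows "comm_subgroup G A B \<subseteq> comm_subgroup G A' B'"
  unfolding comm_subgroup_def using assms by (intro mono_generate) auto

lemma (in group_hom) comm_subgroup_image:
  assumes "A \<subseteq> carrier G" and "B \<subseteq> carrier G"
  shows "h ` comm_subgroup G A B = comm_subgroup H (h ` A) (h ` B)"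
proof -
  let ?S = "{a \<otimes>\<^bsub>G\<^esub> b \<otimes>\<^bsub>G\<^esub> inv\<^bsub>G\<^esub> a \<otimes>\<^bsub>G\<^esub> inv\<^bsub>G\<^esub> b | a b. a \<in> A \<and> b \<in> B}"
  have image: "h ` ?S = {c \<otimes>\<^bsub>H\<^esub> d \<otimes>\<^bsub>H\<^esub> inv\<^bsub>H\<^esub> c \<otimes>\<^bsub>H\<^esub> inv\<^bsub>H\<^esub> d | c d. c \<in> h ` A \<and> d \<in> h ` B}"
    using assms by (auto 0 3 simp: subset_iff intro!: rev_image_eqI)
  have "?S \<subseteq> carrier G"
    using assms by (auto simp: subset_iff)
  then show ?thesis
    unfolding comm_subgroup_def by (simp only: generate_img[symmetric] image)
qed

lemma (in group) lcs_subset_carrier: "lcs G k \<subseteq> carrier G"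
  by (induction k) (simp_all add: comm_subgroup_subset_carrier)

lemma (in group_hom) lcs_image_subset: "h ` lcs G k \<subseteq> lcs H k"
proof (induction k)
  case (Suc k)
  have "h ` comm_subgroup G (carrier G) (lcs G k) = comm_subgroup H (h ` carrier G) (h ` lcs G k)"
    by (simp add: comm_subgroup_image G.lcs_subset_carrier)
  also have "\<dots> \<subseteq> comm_subgroup H (carrier H) (lcs H k)"
    using Suc by (intro H.comm_subgroup_mono) auto
  finally show ?case by auto
qed auto

lemma (in group_hom) inv_hom_qm_comp:
  assumes "inv_hom_qm H N' \<phi>" and "N \<subseteq> carrier G" and "h ` N \<subseteq> N'"
  shows "inv_hom_qm G N (\<lambda>x. \<phi> (h x))"
proof -
  obtain D where "\<forall>x\<in>N'. \<forall>y\<in>N'. \<bar>\<phi> (x \<otimes>\<^bsub>H\<^esub> y) - \<phi> x - \<phi> y\<bar> \<le> D"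
    using assms(1) unfolding inv_hom_qm_def by blast
  then have "\<forall>x\<in>N. \<forall>y\<in>N. \<bar>\<phi> (h (x \<otimes>\<^bsub>G\<^esub> y)) - \<phi> (h x) - \<phi> (h y)\<bar> \<le> D"
    using assms(2,3) by (auto simp: subset_iff)
  with assms show ?thesis
    unfolding inv_hom_qm_def by (auto simp: subset_iff hom_int_pow)
qed

lemma (in group_hom) inv_hom_real_comp:
  assumes "inv_hom_real H N' \<phi>" and "N \<subseteq> carrier G" and "h ` N \<subseteq> N'"
  shows "inv_hom_real G N (\<lambda>x. \<phi> (h x))"
  using assms unfolding inv_hom_real_def by (auto simp: subset_iff)

lemma W_nonzero_transfer_split:
  assumes "group_hom G H \<beta>" and "group_hom H G s"
    and left_inverse: "\<forall>x\<in>carrier H. \<beta> (s x) = x"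
    and "NG \<subseteq> carrier G" and "NH \<subseteq> carrier H" and "LH \<subseteq> carrier H"
    and "\<beta> ` NG \<subseteq> NH" and "s ` NH \<subseteq> NG" and "s ` LH \<subseteq> LG"
    and "W_nonzero H LH NH"
  shows "W_nonzero G LG NG"
proof -
  obtain \<psi> where \<psi>: "inv_hom_qm H NH \<psi>"
    and indecomposable: "\<not> (\<exists>h \<phi>. inv_hom_real H NH h \<and> inv_hom_qm H LH \<phi> \<and> (\<forall>x\<in>NH. \<psi> x = h x + \<phi> x))"
    using \<open>W_nonzero H LH NH\<close> unfolding W_nonzero_def by blast
  have "\<not> (\<exists>h \<phi>. inv_hom_real G NG h \<and> inv_hom_qm G LG \<phi> \<and> (\<forall>x\<in>NG. \<psi> (\<beta> x) = h x + \<phi> x))"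
  proof
    assume "\<exists>h \<phi>. inv_hom_real G NG h \<and> inv_hom_qm G LG \<phi> \<and> (\<forall>x\<in>NG. \<psi> (\<beta> x) = h x + \<phi> x)"
    then obtain h \<phi> where "inv_hom_real G NG h" "inv_hom_qm G LG \<phi>"
      and decomposition: "\<forall>x\<in>NG. \<psi> (\<beta> x) = h x + \<phi> x"
      by blast
    then have "inv_hom_real H NH (\<lambda>x. h (s x))" "inv_hom_qm H LH (\<lambda>x. \<phi> (s x))"
      using assms by (simp_all add: group_hom.inv_hom_real_comp group_hom.inv_hom_qm_comp)
    moreover have "\<forall>x\<in>NH. \<psi> x = h (s x) + \<phi> (s x)"
      using decomposition left_inverse assms(5,8) by (metis image_subset_iff subsetD)
    ultimately show False
      using indecomposable by blast
  qed
  moreover have "inv_hom_qm G NG (\<lambda>x. \<psi> (\<beta> x))"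
    using assms \<psi> by (simp add: group_hom.inv_hom_qm_comp)
  ultimately show ?thesis
    unfolding W_nonzero_def by blast
qed

lemma retract_iso_split:
  assumes "group G" and "group H" and K: "subgroup K G"
    and "G\<lparr>carrier := K\<rparr> \<cong> H" and "is_retract G K"
  obtains \<beta> s where "group_hom G H \<beta>" and "group_hom H G s" and "\<forall>x\<in>carrier H. \<beta> (s x) = x"
proof -
  obtain f where f: "f \<in> iso (G\<lparr>carrier := K\<rparr>) H"
    using assms(4) unfolding is_iso_def by blast
  obtain \<alpha> where \<alpha>: "\<alpha> \<in> hom G G" "\<alpha> ` carrier G = K" "\<forall>x\<in>K. \<alpha> x = x"
    using assms(5) unfolding is_retract_def by blast
  have "group (G\<lparr>carrier := K\<rparr>)"
    using assms(1) K by (simp add: subgroup.subgroup_is_group)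
  then have "inv_into K f \<in> iso H (G\<lparr>carrier := K\<rparr>)"
    using group.iso_set_sym[OF _ f] by simp
  then have s: "inv_into K f \<in> hom H G" and s_into_K: "inv_into K f ` carrier H \<subseteq> K"
    using subgroup.subset[OF K] by (auto simp: iso_def hom_def)
  have "\<alpha> \<in> hom G (G\<lparr>carrier := K\<rparr>)"
    using \<alpha>(1,2) by (auto simp: hom_def)
  then have \<beta>: "f \<circ> \<alpha> \<in> hom G H"
    using f hom_compose by (auto simp: iso_def)
  have "\<forall>x\<in>carrier H. (f \<circ> \<alpha>) (inv_into K f x) = x"
    using s_into_K \<alpha>(3) f by (auto simp: iso_def bij_betw_inv_into_right)
  with \<beta> s show ?thesis
    using assms(1,2) that by (simp add: group_hom_def group_hom_axioms_def)
qed

lemma W_nonzero_lcs_retract: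
  assumes "group G" and "group H" and "subgroup K G"
    and "G\<lparr>carrier := K\<rparr> \<cong> H" and "is_retract G K"
    and "W_nonzero H (lcs H i) (lcs H j)"
  shows "W_nonzero G (lcs G i) (lcs G j)"
proof -
  obtain \<beta> s where \<beta>: "group_hom G H \<beta>" and s: "group_hom H G s"
    and "\<forall>x\<in>carrier H. \<beta> (s x) = x"
    using retract_iso_split assms(1-5) by blast
  then show ?thesis
    using assms(6) group.lcs_subset_carrier[OF assms(1)] group.lcs_subset_carrier[OF assms(2)]
      group_hom.lcs_image_subset[OF \<beta>] group_hom.lcs_image_subset[OF s]
    by (intro W_nonzero_transfer_split[of G H \<beta> s]) auto
qed

theorem proposition11p22:
  fixes q :: nat and H1 :: "'a monoid" and H2 :: "'b monoid" and G :: "'c monoid"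
  assumes "q \<ge> 3"
    and "group H1" and "group H2" and "group G"
    and "W_nonzero H1 (lcs H1 (q - 1)) (lcs H1 q)"
    and "W_nonzero H2 (carrier H2) (lcs H2 (q - 1))"
    and "\<exists>K1. subgroup K1 G \<and> G\<lparr>carrier := K1\<rparr> \<cong> H1 \<and> is_retract G K1"
    and "\<exists>K2. subgroup K2 G \<and> G\<lparr>carrier := K2\<rparr> \<cong> H2 \<and> is_retract G K2"
  shows "W_nonzero G (lcs G (q - 1)) (lcs G q) \<and> W_nonzero G (carrier G) (lcs G (q - 1))"
proof
  obtain K1 where "subgroup K1 G" "G\<lparr>carrier := K1\<rparr> \<cong> H1" "is_retract G K1"
    using assms(7) by blast
  then show "W_nonzero G (lcs G (q - 1)) (lcs G q)"
    using W_nonzero_lcs_retract assms(2,4,5) by blast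
next
  obtain K2 where "subgroup K2 G" "G\<lparr>carrier := K2\<rparr> \<cong> H2" "is_retract G K2"
    using assms(8) by blast
  moreover have "lcs H2 1 = carrier H2" and "lcs G 1 = carrier G"
    by simp_all
  ultimately show "W_nonzero G (carrier G) (lcs G (q - 1))"
    using W_nonzero_lcs_retract[of G H2 K2 1 "q - 1"] assms(3,4,6) by simp
qed

end
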